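(* Let $L$ be a PG-lattice and $M$ a faithful multiplication PG-lattice $L$-module with $I_M$ compact. Let $N$ be a proper element of $M$ and $\delta_L$ an expansion function on $L$. Then the following are equivalent: (1) $N$ is a $\delta_L$-primary element of $M$; (2) $(N:I_M)$ is a $\delta_L$-primary element of $L$; (3) $N=qI_M$ for some $\delta_L$-primary element $q\in L$.
   Context: $L$ is a multiplicative lattice (complete lattice with commutative, associative multiplication distributing over arbitrary joins, identity $1$, least $0$), compactly generated, $1$ compact, finite products of compact elements compact. An $L$-module is a complete lattice $M$ (least $O_M$, greatest $I_M$) with product $aB\in M$ satisfying $(\bigvee a_\alpha)A=\bigvee(a_\alpha A)$, $a(\bigvee A_\alpha)=\bigvee(aA_\alpha)$, $(ab)A=a(bA)$, $1A=A$, $0A=O_M$. $(A:B)=\bigvee\{x\in L:xB\leqslant A\}$ for $A,B\in M$. $e\in L$ is principal if $a\wedge be=((a:e)\wedge b)e$ and $(ae\vee b):e=(b:e)\vee a$ for all $a,b$; $L$ is a PG-lattice if every element is a join of principal elements. $N\in M$ is principal if $(b\wedge(B:N))N=bN\wedge B$ and $b\vee(B:N)=((bN\vee B):N)$ for all $b\in L,B\in M$; $M$ is a PG-lattice module if every element is a join of principal elements. $M$ is faithful if $(O_M:I_M)=0$; a multiplication module if every element of $M$ is $aI_M$ for some $a\in L$. An expansion function on $L$ is a map $\delta_L:L\to L$ with $a\leqslant\delta_L(a)$ and $a\leqslant b\Rightarrow\delta_L(a)\leqslant\delta_L(b)$. A proper element $p<1$ of $L$ is $\delta_L$-primary if for $a,b\in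 L$, $ab\leqslant p$ implies $a\leqslant p$ or $b\leqslant\delta_L(p)$. A proper element $P<I_M$ of $M$ is $\delta_L$-primary if for all $A\in M$, $a\in L$, $aA\leqslant P$ implies $A\leqslant P$ or $a\leqslant\delta_L((P:I_M))$. *)

theory Defs
  imports Main
begin

text \<open>Multiplicative lattices are modelled as a complete lattice type 'a together with a
  multiplication operation mult; the multiplicative identity 1 is the top element.\<close>

definition compact_el :: "'a::complete_lattice \<Rightarrow> bool" where
  "compact_el x \<longleftrightarrow> (\<forall>S. x \<le> Sup S \<longrightarrow> (\<exists>F. F \<subseteq> S \<and> finite F \<and> x \<le> Sup F))"

definition mult_lattice :: "('a::complete_lattice \<Rightarrow> 'a \<Rightarrow> 'a) \<Rightarrow> bool" where
  "mult_lattice mult \<longleftrightarrow>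
     (\<forall>a b. mult a b = mult b a) \<and>
     (\<forall>a b c. mult (mult a b) c = mult a (mult b c)) \<and>
     (\<forall>a S. mult a (Sup S) = Sup (mult a ` S)) \<and>
     (\<forall>a. mult top a = a)"

definition std_mult_lattice :: "('a::complete_lattice \<Rightarrow> 'a \<Rightarrow> 'a) \<Rightarrow> bool" where
  "std_mult_lattice mult \<longleftrightarrow>
     mult_lattice mult \<and>
     (\<forall>x::'a. \<exists>S. (\<forall>s\<in>S. compact_el s) \<and> x = Sup S) \<and>
     compact_el (top::'a) \<and>
     (\<forall>a b. compact_el a \<longrightarrow> compact_el b \<longrightarrow> compact_el (mult a b))"

definition lattice_module ::
  "('a::complete_lattice \<Rightarrow> 'a \<Rightarrow> 'a) \<Rightarrow> ('a \<Rightarrow> 'm::complete_lattice \<Rightarrow> 'm) \<Rightarrow> bool" where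
  "lattice_module mult act \<longleftrightarrow>
     (\<forall>S A. act (Sup S) A = Sup ((\<lambda>a. act a A) ` S)) \<and>
     (\<forall>a T. act a (Sup T) = Sup (act a ` T)) \<and>
     (\<forall>a b A. act (mult a b) A = act a (act b A)) \<and>
     (\<forall>A. act top A = A) \<and>
     (\<forall>A. act bot A = bot)"

definition colonL :: "('a::complete_lattice \<Rightarrow> 'a \<Rightarrow> 'a) \<Rightarrow> 'a \<Rightarrow> 'a \<Rightarrow> 'a" where
  "colonL mult a b = Sup {x. mult x b \<le> a}"

definition colonM :: "('a::complete_lattice \<Rightarrow> 'm::complete_lattice \<Rightarrow> 'm) \<Rightarrow> 'm \<Rightarrow> 'm \<Rightarrow> 'a" where
  "colonM act A B = Sup {x. act x B \<le> A}"

definition principalL :: "('a::complete_lattice \<Rightarrow> 'a \<Rightarrow> 'a) \<Rightarrow> 'a \<Rightarrow> bool" where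
  "principalL mult e \<longleftrightarrow>
     (\<forall>a b. inf a (mult b e) = mult (inf (colonL mult a e) b) e) \<and>
     (\<forall>a b. colonL mult (sup (mult a e) b) e = sup (colonL mult b e) a)"

definition PG_lattice :: "('a::complete_lattice \<Rightarrow> 'a \<Rightarrow> 'a) \<Rightarrow> bool" where
  "PG_lattice mult \<longleftrightarrow> (\<forall>x. \<exists>S. (\<forall>s\<in>S. principalL mult s) \<and> x = Sup S)"

definition principalM :: "('a::complete_lattice \<Rightarrow> 'm::complete_lattice \<Rightarrow> 'm) \<Rightarrow> 'm \<Rightarrow> bool" where
  "principalM act N \<longleftrightarrow>
     (\<forall>b B. act (inf b (colonM act B N)) N = inf (act b N) B) \<and>
     (\<forall>b B. sup b (colonM act B N) = colonM act (sup (act b N) B) N)"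

definition PG_module :: "('a::complete_lattice \<Rightarrow> 'm::complete_lattice \<Rightarrow> 'm) \<Rightarrow> bool" where
  "PG_module act \<longleftrightarrow> (\<forall>X. \<exists>S. (\<forall>s\<in>S. principalM act s) \<and> X = Sup S)"

definition faithful :: "('a::complete_lattice \<Rightarrow> 'm::complete_lattice \<Rightarrow> 'm) \<Rightarrow> bool" where
  "faithful act \<longleftrightarrow> colonM act bot top = bot"

definition multiplication_module :: "('a::complete_lattice \<Rightarrow> 'm::complete_lattice \<Rightarrow> 'm) \<Rightarrow> bool" where
  "multiplication_module act \<longleftrightarrow> (\<forall>A. \<exists>a. A = act a top)"

definition expansion_fun :: "('a::complete_lattice \<Rightarrow> 'a) \<Rightarrow> bool" where
  "expansion_fun \<delta> \<longleftrightarrow> (\<forall>a. a \<le> \<delta> a) \<and> (\<forall>a b. a \<le> b \<longrightarrow> \<delta> a \<le> \<delta> b)"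

definition delta_primaryL :: "('a::complete_lattice \<Rightarrow> 'a \<Rightarrow> 'a) \<Rightarrow> ('a \<Rightarrow> 'a) \<Rightarrow> 'a \<Rightarrow> bool" where
  "delta_primaryL mult \<delta> p \<longleftrightarrow>
     p < top \<and> (\<forall>a b. mult a b \<le> p \<longrightarrow> a \<le> p \<or> b \<le> \<delta> p)"

definition delta_primaryM ::
  "('a::complete_lattice \<Rightarrow> 'm::complete_lattice \<Rightarrow> 'm) \<Rightarrow> ('a \<Rightarrow> 'a) \<Rightarrow> 'm \<Rightarrow> bool" where
  "delta_primaryM act \<delta> P \<longleftrightarrow>
     P < top \<and> (\<forall>A a. act a A \<le> P \<longrightarrow> A \<le> P \<or> a \<le> \<delta> (colonM act P top))"

end

theory Submission
  imports Defs
begin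

text \<open>The heart of the matter is that a faithful multiplication PG-module with compact top
  element satisfies the cancellation law \<open>x I\<^sub>M \<le> a I\<^sub>M \<Longrightarrow> x \<le> a\<close>. Writing \<open>\<theta>\<close> for the trace, the join of
  the residuals \<open>(N : I\<^sub>M)\<close> over all principal \<open>N\<close>, one has \<open>\<theta> I\<^sub>M = I\<^sub>M\<close>, hence \<open>\<theta> \<or> (0 : N) = 1\<close>
  for every principal \<open>N\<close>; compactness of \<open>I\<^sub>M\<close> and faithfulness then force \<open>\<theta> = 1\<close>. For principal
  \<open>N\<close>, \<open>x I\<^sub>M \<le> a I\<^sub>M\<close> gives \<open>x \<le> (aN : N) = a \<or> (0 : N)\<close>, so \<open>x (N : I\<^sub>M) \<le> a\<close>, and joining
  over \<open>N\<close> yields \<open>x = x\<theta> \<le> a\<close>. Consequently \<open>N = q I\<^sub>M\<close> forces \<open>q = (N : I\<^sub>M)\<close>, and primariness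
  transfers between \<open>N\<close> and \<open>(N : I\<^sub>M)\<close> because every element of \<open>M\<close> has the form \<open>b I\<^sub>M\<close>.\<close>

locale multiplicative_lattice =
  fixes mult :: "'a::complete_lattice \<Rightarrow> 'a \<Rightarrow> 'a"
  assumes mult_lattice: "mult_lattice mult"
begin

lemma mult_commute: "mult a b = mult b a"
  using mult_lattice by (simp add: mult_lattice_def)

lemma mult_Sup: "mult a (Sup S) = Sup (mult a ` S)"
  using mult_lattice by (simp add: mult_lattice_def)

lemma mult_top_left: "mult top a = a"
  using mult_lattice by (simp add: mult_lattice_def)

lemma mult_top_right: "mult a top = a"
  using mult_commute mult_top_left by metis

lemma mult_sup_right: "mult a (sup b c) = sup (mult a b) (mult a c)"
  using mult_Sup[of a "{b, c}"] by simp

lemma mult_mono_right: "b \<le> c \<Longrightarrow> mult a b \<le> mult a c"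
  by (metis mult_sup_right sup.absorb2 sup.cobounded1)

lemma mult_le_left: "mult a b \<le> a"
  by (metis mult_commute mult_mono_right mult_top_left top_greatest)

lemma mult_le_right: "mult a b \<le> b"
  by (metis mult_commute mult_le_left)

lemma sup_INF_eq_top_if_comaximal:
  fixes t :: 'a
  assumes "finite F" and "\<forall>i\<in>F. sup t (g i) = top"
  shows "sup t (INF i\<in>F. g i) = top"
  using assms
proof (induction F rule: finite_induct)
  case empty
  show ?case by simp
next
  case (insert i F)
  define r where "r = (INF j\<in>F. g j)"
  have gi: "sup t (g i) = top" and r: "sup t r = top"
    using insert by (simp_all add: r_def)
  have "top = mult (sup t (g i)) (sup t r)"
    using gi r mult_top_left by simp
  also have "\<dots> = sup (mult (sup t (g i)) t) (sup (mult t r) (mult (g i) r))"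
    using mult_sup_right mult_commute by metis
  also have "\<dots> \<le> sup t (inf (g i) r)"
    using mult_le_left[of t r] mult_le_right[of _ t] mult_le_left[of "g i" r] mult_le_right[of "g i" r]
    by (meson inf_sup_ord le_inf_iff order_trans sup_least sup_mono)
  finally show ?case
    by (simp add: r_def top_le)
qed

end

locale lattice_mod = multiplicative_lattice mult
  for mult :: "'a::complete_lattice \<Rightarrow> 'a \<Rightarrow> 'a" +
  fixes act :: "'a \<Rightarrow> 'm::complete_lattice \<Rightarrow> 'm"
  assumes lattice_module: "lattice_module mult act"
begin

lemma act_Sup_left: "act (Sup S) A = Sup ((\<lambda>a. act a A) ` S)"
  using lattice_module by (simp add: lattice_module_def)

lemma act_Sup_right: "act a (Sup T) = Sup (act a ` T)"
  using lattice_module by (simp add: lattice_module_def)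

lemma act_mult: "act (mult a b) A = act a (act b A)"
  using lattice_module by (simp add: lattice_module_def)

lemma act_top_left: "act top A = A"
  using lattice_module by (simp add: lattice_module_def)

lemma act_commute: "act a (act b A) = act b (act a A)"
  by (metis act_mult mult_commute)

lemma act_mono_left: "a \<le> b \<Longrightarrow> act a A \<le> act b A"
  using act_Sup_left[of "{a, b}" A] by (simp add: sup.absorb2) (metis sup.cobounded1)

lemma act_mono_right: "A \<le> B \<Longrightarrow> act a A \<le> act a B"
  using act_Sup_right[of a "{A, B}"] by (simp add: sup.absorb2) (metis sup.cobounded1)

lemma act_colonM_le: "act (colonM act A B) B \<le> A"
  unfolding colonM_def act_Sup_left by (rule SUP_least) simp

lemma le_colonM_iff: "x \<le> colonM act A B \<longleftrightarrow> act x B \<le> A"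
proof
  assume "x \<le> colonM act A B"
  then show "act x B \<le> A"
    using act_mono_left act_colonM_le order_trans by blast
qed (simp add: colonM_def Sup_upper)

lemma colonM_self: "colonM act A A = top"
  using le_colonM_iff[of top A A] act_top_left by (simp add: top_le)

lemma colonM_less_top_iff: "colonM act N top < top \<longleftrightarrow> N < top"
  using le_colonM_iff[of top N top] act_top_left by (simp add: less_le_not_le)

lemma faithful_act_top_eq_bot:
  assumes "faithful act" and "act x top \<le> bot"
  shows "x = bot"
  using assms le_colonM_iff[of x bot top] by (simp add: faithful_def bot_unique)

lemma act_colonM_top:
  assumes "multiplication_module act"
  shows "act (colonM act N top) top = N"
proof -
  obtain b where b: "N = act b top"
    using assms unfolding multiplication_module_def by blast
  then have "N \<le> act (colonM act N top) top"
    using act_mono_left le_colonM_iff by simp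
  then show ?thesis
    using act_colonM_le antisym by blast
qed

lemma colonM_act_principal:
  assumes "principalM act N"
  shows "colonM act (act b N) N = sup b (colonM act bot N)"
  using assms unfolding principalM_def by (metis sup_bot_right)

lemma mult_colonM_annihilator:
  assumes "faithful act"
  shows "mult (colonM act N top) (colonM act bot N) = bot"
proof (rule faithful_act_top_eq_bot[OF assms])
  have "act (mult (colonM act N top) (colonM act bot N)) top
      = act (colonM act bot N) (act (colonM act N top) top)"
    by (simp add: act_mult act_commute)
  also have "\<dots> \<le> act (colonM act bot N) N"
    by (intro act_mono_right act_colonM_le)
  also have "\<dots> \<le> bot"
    by (rule act_colonM_le)
  finally show "act (mult (colonM act N top) (colonM act bot N)) top \<le> bot" .
qed

lemma INF_annihilator_eq_bot:
  assumes "faithful act" and "top \<le> Sup F"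
  shows "(INF N\<in>F. colonM act bot N) = bot"
proof (rule faithful_act_top_eq_bot[OF assms(1)])
  have "act (INF N\<in>F. colonM act bot N) N \<le> bot" if "N \<in> F" for N
    using that le_colonM_iff by (meson INF_lower)
  then have "act (INF N\<in>F. colonM act bot N) (Sup F) \<le> bot"
    by (simp add: act_Sup_right SUP_least)
  then show "act (INF N\<in>F. colonM act bot N) top \<le> bot"
    using assms(2) by (metis top_le)
qed

context
  assumes faithful: "faithful act"
    and multiplication: "multiplication_module act"
    and PG_module: "PG_module act"
    and top_compact: "compact_el (top::'m)"
begin

definition trace :: 'a where
  "trace = Sup {colonM act N top | N. principalM act N}"

lemma act_trace_top: "act trace top = top"
proof -
  obtain S where S: "\<forall>s\<in>S. principalM act s" "top = Sup S"
    using PG_module unfolding PG_module_def by blast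
  have "act trace top = Sup ((\<lambda>c. act c top) ` {colonM act N top | N. principalM act N})"
    unfolding trace_def by (rule act_Sup_left)
  also have "\<dots> = Sup {N. principalM act N}"
    using act_colonM_top[OF multiplication] by (intro arg_cong[where f = Sup]) (auto simp: image_def)
  also have "\<dots> \<ge> Sup S"
    using S(1) by (intro Sup_subset_mono) auto
  finally show ?thesis
    using S(2) by (simp add: top_le)
qed

lemma sup_trace_annihilator:
  assumes "principalM act N"
  shows "sup trace (colonM act bot N) = top"
proof -
  have "act trace N = act (colonM act N top) (act trace top)"
    using act_colonM_top[OF multiplication, of N] act_commute by metis
  then have "act trace N = N"
    using act_trace_top act_colonM_top[OF multiplication] by simp
  then show ?thesis
    using colonM_act_principal[OF assms, of trace] colonM_self by simp
qed

lemma trace_eq_top: "trace = top"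
proof -
  obtain S where S: "\<forall>s\<in>S. principalM act s" "top = Sup S"
    using PG_module unfolding PG_module_def by blast
  then obtain F where F: "F \<subseteq> S" "finite F" "top \<le> Sup F"
    using top_compact unfolding compact_el_def by (metis order_refl)
  have "sup trace (INF N\<in>F. colonM act bot N) = top"
    using sup_INF_eq_top_if_comaximal[OF F(2)] sup_trace_annihilator S(1) F(1) by blast
  then show ?thesis
    using INF_annihilator_eq_bot[OF faithful F(3)] by simp
qed

lemma mult_colonM_principal_le:
  assumes le: "act x top \<le> act a top" and N: "principalM act N"
  shows "mult x (colonM act N top) \<le> a"
proof -
  let ?c = "colonM act N top"
  have "act x N = act ?c (act x top)"
    using act_colonM_top[OF multiplication, of N] act_commute by metis
  also have "\<dots> \<le> act ?c (act a top)"
    using le by (rule act_mono_right)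
  also have "\<dots> = act a N"
    using act_colonM_top[OF multiplication, of N] act_commute by metis
  finally have "x \<le> sup a (colonM act bot N)"
    using le_colonM_iff colonM_act_principal[OF N] by metis
  then have "mult ?c x \<le> sup (mult ?c a) (mult ?c (colonM act bot N))"
    using mult_mono_right mult_sup_right by metis
  also have "\<dots> = mult ?c a"
    using mult_colonM_annihilator[OF faithful] by simp
  also have "\<dots> \<le> a"
    by (rule mult_le_right)
  finally show ?thesis
    by (simp add: mult_commute)
qed

lemma act_top_cancel:
  assumes "act x top \<le> act a top"
  shows "x \<le> a"
proof -
  have "x = mult x trace"
    by (simp add: trace_eq_top mult_top_right)
  also have "\<dots> = Sup (mult x ` {colonM act N top | N. principalM act N})"
    unfolding trace_def by (rule mult_Sup)
  also have "\<dots> \<le> a"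
    using mult_colonM_principal_le[OF assms] by (auto intro: SUP_least)
  finally show ?thesis .
qed

lemma colonM_act_top: "colonM act (act q top) top = q"
  using act_top_cancel act_colonM_le le_colonM_iff by (metis antisym order_refl)

end

lemma delta_primaryM_iff_delta_primaryL_colonM:
  assumes "multiplication_module act"
  shows "delta_primaryM act \<delta> N \<longleftrightarrow> delta_primaryL mult \<delta> (colonM act N top)"
    (is "?M \<longleftrightarrow> ?L")
proof
  assume ?M
  show ?L
    unfolding delta_primaryL_def
  proof (intro conjI allI impI)
    show "colonM act N top < top"
      using \<open>?M\<close> colonM_less_top_iff by (simp add: delta_primaryM_def)
    fix a b
    assume "mult a b \<le> colonM act N top"
    then have "act b (act a top) \<le> N"
      using le_colonM_iff act_mult mult_commute by metis
    then show "a \<le> colonM act N top \<or> b \<le> \<delta> (colonM act N top)"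
      using \<open>?M\<close> le_colonM_iff unfolding delta_primaryM_def by blast
  qed
next
  assume ?L
  show ?M
    unfolding delta_primaryM_def
  proof (intro conjI allI impI)
    show "N < top"
      using \<open>?L\<close> colonM_less_top_iff by (simp add: delta_primaryL_def)
    fix A a
    assume aA: "act a A \<le> N"
    obtain b where b: "A = act b top"
      using assms unfolding multiplication_module_def by blast
    then have "mult b a \<le> colonM act N top"
      using aA le_colonM_iff act_mult act_commute by metis
    then show "A \<le> N \<or> a \<le> \<delta> (colonM act N top)"
      using \<open>?L\<close> b le_colonM_iff unfolding delta_primaryL_def by blast
  qed
qed

end

theorem theorem4p14:
  fixes mult :: "'a::complete_lattice \<Rightarrow> 'a \<Rightarrow> 'a"
    and act :: "'a \<Rightarrow> 'm::complete_lattice \<Rightarrow> 'm"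
    and N :: 'm
    and \<delta> :: "'a \<Rightarrow> 'a"
  assumes L: "std_mult_lattice mult"
    and PG: "PG_lattice mult"
    and M: "lattice_module mult act"
    and faith: "faithful act"
    and mult_mod: "multiplication_module act"
    and PGM: "PG_module act"
    and cpt: "compact_el (top::'m)"
    and proper: "N < top"
    and exp: "expansion_fun \<delta>"
  shows "(delta_primaryM act \<delta> N \<longleftrightarrow> delta_primaryL mult \<delta> (colonM act N top))
       \<and> (delta_primaryL mult \<delta> (colonM act N top) \<longleftrightarrow>
            (\<exists>q. delta_primaryL mult \<delta> q \<and> N = act q top))"
proof -
  interpret lattice_mod mult act
    using L M by unfold_locales (simp_all add: std_mult_lattice_def)
  have "N = act q top \<longleftrightarrow> q = colonM act N top" for q
    using colonM_act_top[OF faith mult_mod PGM cpt] act_colonM_top[OF mult_mod] by metis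
  then show ?thesis
    using delta_primaryM_iff_delta_primaryL_colonM[OF mult_mod] by metis
qed

end
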